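(* Let $f(x) = a_3x^3 + a_2x^2 + a_1x + a_0$ be a real polynomial with $a_3 > 0$ and $a_2^2 - 3a_1a_3 \geq 0$. Consider the condition $(\dagger)$: $\frac{-2a_2^3 + 9a_1a_2a_3 - 2(a_2^2 - 3a_1a_3)^{3/2}}{27a_3^2} \leq a_0 \leq \frac{-2a_2^3 + 9a_1a_2a_3 + 2(a_2^2 - 3a_1a_3)^{3/2}}{27a_3^2}$. Then: (1) all complex roots of $f(x)$ are real and non-negative if and only if $a_2 \leq 0$, $0 \leq a_1 \leq \frac{a_2^2}{3a_3}$, $a_0 \leq 0$ and $(\dagger)$ holds; (2) all complex roots of $f(x)$ are real and positive if and only if $a_2 < 0$, $0 < a_1 \leq \frac{a_2^2}{3a_3}$, $a_0 < 0$ and $(\dagger)$ holds.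
   Context: For a non-negative real $r$, $r^{3/2}$ denotes the non-negative real number $(\sqrt{r})^3$. *)

theory Defs
  imports "HOL-Computational_Algebra.Polynomial" Complex_Main
begin

end

theory Submission
  imports Defs "HOL-Computational_Algebra.Fundamental_Theorem_Algebra"
begin

text \<open>Put \<open>E = 27 a\<^sub>3\<^sup>2 a\<^sub>0 + 2 a\<^sub>2\<^sup>3 - 9 a\<^sub>1 a\<^sub>2 a\<^sub>3\<close>. Condition (\<open>\<dagger>\<close>) says \<open>E\<^sup>2 \<le> 4 D\<^sup>3\<close>, and
  \<open>4 D\<^sup>3 - E\<^sup>2\<close> is \<open>27 a\<^sub>3\<^sup>2\<close> times the discriminant. In terms of the roots it is
  \<open>27 a\<^sub>3\<^sup>6\<close> times the squared Vandermonde product: nonnegative if all roots are real,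
  negative if there is a conjugate pair \<open>u \<plusminus> iv\<close> with \<open>v \<noteq> 0\<close>. So (\<open>\<dagger>\<close>) holds exactly when
  all roots are real. Given real roots, Vieta's formulas turn their signs into the signs
  of the coefficients; conversely, alternating coefficient signs make the cubic negative
  for \<open>x < 0\<close> (and at \<open>0\<close> if \<open>a\<^sub>0 < 0\<close>). The bound \<open>a\<^sub>1 \<le> a\<^sub>2\<^sup>2 / (3 a\<^sub>3)\<close> is just \<open>D \<ge> 0\<close>.\<close>

abbreviation real_cubic :: "real \<Rightarrow> real \<Rightarrow> real \<Rightarrow> real \<Rightarrow> complex poly" where
  "real_cubic a0 a1 a2 a3 \<equiv>
     [:complex_of_real a0, complex_of_real a1, complex_of_real a2, complex_of_real a3:]"

text \<open>\<open>27 a\<^sub>3\<^sup>2\<close> times the discriminant of \<open>a\<^sub>3 x\<^sup>3 + a\<^sub>2 x\<^sup>2 + a\<^sub>1 x + a\<^sub>0\<close>.\<close>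
definition cubic_discr :: "real \<Rightarrow> real \<Rightarrow> real \<Rightarrow> real \<Rightarrow> real" where
  "cubic_discr a0 a1 a2 a3 =
     4 * (a2\<^sup>2 - 3 * a1 * a3) ^ 3 - (27 * a3\<^sup>2 * a0 + 2 * a2 ^ 3 - 9 * a1 * a2 * a3)\<^sup>2"

lemma cubic_discr_real_roots:
  fixes a0 a1 a2 a3 s0 s1 s2 :: real
  assumes "a2 = - a3 * (s0 + s1 + s2)" "a1 = a3 * (s0 * s1 + s0 * s2 + s1 * s2)"
    and "a0 = - a3 * s0 * s1 * s2"
  shows "cubic_discr a0 a1 a2 a3 = 27 * a3 ^ 6 * ((s0 - s1) * (s0 - s2) * (s1 - s2))\<^sup>2"
  unfolding cubic_discr_def assms by algebra

lemma cubic_discr_nonreal_roots: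
  fixes a0 a1 a2 a3 u v r :: real
  assumes "a2 = - a3 * (2 * u + r)" "a1 = a3 * (u\<^sup>2 + v\<^sup>2 + 2 * u * r)"
    and "a0 = - a3 * r * (u\<^sup>2 + v\<^sup>2)"
  shows "cubic_discr a0 a1 a2 a3 = - 108 * a3 ^ 6 * v\<^sup>2 * ((u - r)\<^sup>2 + v\<^sup>2)\<^sup>2"
  unfolding cubic_discr_def assms by algebra

lemma poly_real_cubic_Complex:
  "poly (real_cubic a0 a1 a2 a3) (Complex u v) =
     Complex (a3 * (u ^ 3 - 3 * u * v\<^sup>2) + a2 * (u\<^sup>2 - v\<^sup>2) + a1 * u + a0)
             (v * (a3 * (3 * u\<^sup>2 - v\<^sup>2) + 2 * a2 * u + a1))"
  by (simp add: complex_eq_iff algebra_simps power2_eq_square power3_eq_cube)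

lemma poly_real_cubic_of_real:
  "poly (real_cubic a0 a1 a2 a3) (of_real x) = of_real (a3 * x ^ 3 + a2 * x\<^sup>2 + a1 * x + a0)"
  by (simp add: algebra_simps power2_eq_square power3_eq_cube)

text \<open>The roots are \<open>u \<plusminus> iv\<close> and the real number \<open>r\<close>.\<close>
lemma real_cubic_nonreal_root_Vieta:
  fixes a0 a1 a2 a3 u v :: real
  assumes "a3 \<noteq> 0" "v \<noteq> 0" "poly (real_cubic a0 a1 a2 a3) (Complex u v) = 0"
  obtains r where "a2 = - a3 * (2 * u + r)" "a1 = a3 * (u\<^sup>2 + v\<^sup>2 + 2 * u * r)"
    and "a0 = - a3 * r * (u\<^sup>2 + v\<^sup>2)"
proof
  define r where "r = - a2 / a3 - 2 * u"
  have re: "a3 * (u ^ 3 - 3 * u * v\<^sup>2) + a2 * (u\<^sup>2 - v\<^sup>2) + a1 * u + a0 = 0"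
    and im: "a3 * (3 * u\<^sup>2 - v\<^sup>2) + 2 * a2 * u + a1 = 0"
    using assms(2,3) unfolding poly_real_cubic_Complex by (simp_all add: complex_eq_iff)
  show a2: "a2 = - a3 * (2 * u + r)"
    using assms(1) by (simp add: r_def field_simps)
  show a1: "a1 = a3 * (u\<^sup>2 + v\<^sup>2 + 2 * u * r)"
    using im unfolding a2 by (simp add: algebra_simps power2_eq_square)
  show "a0 = - a3 * r * (u\<^sup>2 + v\<^sup>2)"
    using re unfolding a1 a2 by (simp add: algebra_simps power2_eq_square power3_eq_cube)
qed

lemma real_cubic_real_roots_Vieta:
  fixes a0 a1 a2 a3 :: real
  assumes "a3 \<noteq> 0" and real: "\<forall>z. poly (real_cubic a0 a1 a2 a3) z = 0 \<longrightarrow> z \<in> \<real>"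
  obtains s0 s1 s2 where "a2 = - a3 * (s0 + s1 + s2)"
    "a1 = a3 * (s0 * s1 + s0 * s2 + s1 * s2)" "a0 = - a3 * s0 * s1 * s2"
    and "\<forall>s\<in>{s0, s1, s2}. poly (real_cubic a0 a1 a2 a3) (of_real s) = 0"
proof -
  let ?f = "real_cubic a0 a1 a2 a3"
  obtain root where decompose: "smult (lead_coeff ?f) (\<Prod>i<degree ?f. [:- root i, 1:]) = ?f"
    using complex_poly_decompose' by blast
  have "degree ?f = 3" "lead_coeff ?f = of_real a3"
    using assms(1) by simp_all
  then have factor: "?f = smult (of_real a3) ([:- root 0, 1:] * [:- root 1, 1:] * [:- root 2, 1:])"
    using decompose by (simp add: lessThan_nat_numeral mult_ac)
  have poly_factor: "poly ?f x = of_real a3 *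
      (poly [:- root 0, 1:] x * poly [:- root 1, 1:] x * poly [:- root 2, 1:] x)" for x
    by (subst factor) (simp only: poly_smult poly_mult)
  then have roots: "poly ?f (root i) = 0" if "i \<in> {0, 1, 2}" for i
    using that by auto
  then have "root i \<in> \<real>" if "i \<in> {0, 1, 2}" for i
    using real that by blast
  then obtain s0 s1 s2 where s: "root 0 = of_real s0" "root 1 = of_real s1" "root 2 = of_real s2"
    by (metis insertCI of_real_Re)
  have "\<forall>s\<in>{s0, s1, s2}. poly ?f (of_real s) = 0"
    using roots[of 0] roots[of 1] roots[of 2] unfolding s by simp
  moreover have "?f = smult (of_real a3) ([:- of_real s0, 1:] * [:- of_real s1, 1:] * [:- of_real s2, 1:])"
    using factor unfolding s .
  then have "a2 = - a3 * (s0 + s1 + s2) \<and> a1 = a3 * (s0 * s1 + s0 * s2 + s1 * s2) \<and>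
             a0 = - a3 * s0 * s1 * s2"
    by (simp add: algebra_simps) (simp flip: of_real_mult of_real_add of_real_minus of_real_diff)
  ultimately show ?thesis
    using that by blast
qed

lemma real_cubic_roots_real_iff:
  fixes a0 a1 a2 a3 :: real
  assumes "a3 \<noteq> 0"
  shows "(\<forall>z. poly (real_cubic a0 a1 a2 a3) z = 0 \<longrightarrow> z \<in> \<real>) \<longleftrightarrow>
           cubic_discr a0 a1 a2 a3 \<ge> 0"
proof
  assume "\<forall>z. poly (real_cubic a0 a1 a2 a3) z = 0 \<longrightarrow> z \<in> \<real>"
  then obtain s0 s1 s2 where "a2 = - a3 * (s0 + s1 + s2)"
    "a1 = a3 * (s0 * s1 + s0 * s2 + s1 * s2)" "a0 = - a3 * s0 * s1 * s2"
    using assms by (metis real_cubic_real_roots_Vieta)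
  then show "cubic_discr a0 a1 a2 a3 \<ge> 0"
    by (simp only: cubic_discr_real_roots) simp
next
  assume discr: "cubic_discr a0 a1 a2 a3 \<ge> 0"
  show "\<forall>z. poly (real_cubic a0 a1 a2 a3) z = 0 \<longrightarrow> z \<in> \<real>"
  proof (intro allI impI)
    fix z assume root: "poly (real_cubic a0 a1 a2 a3) z = 0"
    obtain u v where z: "z = Complex u v"
      by (cases z)
    show "z \<in> \<real>"
    proof (rule ccontr)
      assume "z \<notin> \<real>"
      then have "v \<noteq> 0"
        using z by (auto simp: complex_is_Real_iff)
      then obtain r where "cubic_discr a0 a1 a2 a3 = - 108 * a3 ^ 6 * v\<^sup>2 * ((u - r)\<^sup>2 + v\<^sup>2)\<^sup>2"
        using root z assms by (metis real_cubic_nonreal_root_Vieta cubic_discr_nonreal_roots)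
      moreover have "a3 ^ 6 * v\<^sup>2 * ((u - r)\<^sup>2 + v\<^sup>2)\<^sup>2 > 0"
        using \<open>v \<noteq> 0\<close> assms by simp
      ultimately show False
        using discr by linarith
    qed
  qed
qed

lemma real_cubic_real_root_sign:
  fixes a0 a1 a2 a3 x :: real
  assumes "a3 > 0" "a2 \<le> 0" "a1 \<ge> 0" "a0 \<le> 0"
    and root: "poly (real_cubic a0 a1 a2 a3) (of_real x) = 0"
  shows "x \<ge> 0" and "a0 < 0 \<Longrightarrow> x > 0"
proof -
  have vanishes: "a3 * x ^ 3 + a2 * x\<^sup>2 + a1 * x + a0 = 0"
    using root by (simp only: poly_real_cubic_of_real of_real_eq_0_iff)
  have "x \<le> 0 \<Longrightarrow> a3 * x ^ 3 \<le> 0 \<and> a2 * x\<^sup>2 \<le> 0 \<and> a1 * x \<le> 0"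
    using assms(1-3) by (simp add: mult_nonneg_nonpos mult_nonpos_nonneg)
  moreover have "x < 0 \<Longrightarrow> a3 * x ^ 3 < 0"
    using assms(1) by (simp add: mult_pos_neg)
  ultimately show "x \<ge> 0" and "a0 < 0 \<Longrightarrow> x > 0"
    using vanishes assms(4) by force+
qed

lemma real_cubic_real_roots_nonneg_iff:
  fixes a0 a1 a2 a3 :: real
  assumes "a3 > 0" and real: "\<forall>z. poly (real_cubic a0 a1 a2 a3) z = 0 \<longrightarrow> z \<in> \<real>"
  shows "(\<forall>z. poly (real_cubic a0 a1 a2 a3) z = 0 \<longrightarrow> Re z \<ge> 0) \<longleftrightarrow>
           a2 \<le> 0 \<and> 0 \<le> a1 \<and> a0 \<le> 0"
proof
  assume nonneg: "\<forall>z. poly (real_cubic a0 a1 a2 a3) z = 0 \<longrightarrow> Re z \<ge> 0"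
  obtain s0 s1 s2 where "a2 = - a3 * (s0 + s1 + s2)"
    "a1 = a3 * (s0 * s1 + s0 * s2 + s1 * s2)" "a0 = - a3 * s0 * s1 * s2"
    and "\<forall>s\<in>{s0, s1, s2}. poly (real_cubic a0 a1 a2 a3) (of_real s) = 0"
    using assms real_cubic_real_roots_Vieta by (metis less_irrefl)
  moreover from this(4) have "s0 \<ge> 0" "s1 \<ge> 0" "s2 \<ge> 0"
    using nonneg by (metis Re_complex_of_real insertCI)+
  ultimately show "a2 \<le> 0 \<and> 0 \<le> a1 \<and> a0 \<le> 0"
    using assms(1) by simp
next
  assume "a2 \<le> 0 \<and> 0 \<le> a1 \<and> a0 \<le> 0"
  then show "\<forall>z. poly (real_cubic a0 a1 a2 a3) z = 0 \<longrightarrow> Re z \<ge> 0"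
    using real real_cubic_real_root_sign(1)[OF assms(1)] by (metis Reals_cases Re_complex_of_real)
qed

lemma real_cubic_real_roots_pos_iff:
  fixes a0 a1 a2 a3 :: real
  assumes "a3 > 0" and real: "\<forall>z. poly (real_cubic a0 a1 a2 a3) z = 0 \<longrightarrow> z \<in> \<real>"
  shows "(\<forall>z. poly (real_cubic a0 a1 a2 a3) z = 0 \<longrightarrow> Re z > 0) \<longleftrightarrow>
           a2 < 0 \<and> 0 < a1 \<and> a0 < 0"
proof
  assume pos: "\<forall>z. poly (real_cubic a0 a1 a2 a3) z = 0 \<longrightarrow> Re z > 0"
  obtain s0 s1 s2 where "a2 = - a3 * (s0 + s1 + s2)"
    "a1 = a3 * (s0 * s1 + s0 * s2 + s1 * s2)" "a0 = - a3 * s0 * s1 * s2"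
    and "\<forall>s\<in>{s0, s1, s2}. poly (real_cubic a0 a1 a2 a3) (of_real s) = 0"
    using assms real_cubic_real_roots_Vieta by (metis less_irrefl)
  moreover from this(4) have "s0 > 0" "s1 > 0" "s2 > 0"
    using pos by (metis Re_complex_of_real insertCI)+
  ultimately show "a2 < 0 \<and> 0 < a1 \<and> a0 < 0"
    using assms(1) by (simp add: add_pos_pos)
next
  assume "a2 < 0 \<and> 0 < a1 \<and> a0 < 0"
  then show "\<forall>z. poly (real_cubic a0 a1 a2 a3) z = 0 \<longrightarrow> Re z > 0"
    using real real_cubic_real_root_sign(2)[OF assms(1)]
    by (metis Reals_cases Re_complex_of_real less_imp_le)
qed

lemma between_sqrt_cube_bounds_iff:
  fixes a c k D :: real
  assumes "k > 0" "D \<ge> 0"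
  shows "(c - 2 * sqrt D ^ 3) / k \<le> a \<and> a \<le> (c + 2 * sqrt D ^ 3) / k \<longleftrightarrow>
           (k * a - c)\<^sup>2 \<le> 4 * D ^ 3"
proof -
  have "(c - 2 * sqrt D ^ 3) / k \<le> a \<and> a \<le> (c + 2 * sqrt D ^ 3) / k \<longleftrightarrow>
        \<bar>k * a - c\<bar> \<le> 2 * sqrt D ^ 3"
    using assms(1) by (auto simp: pos_divide_le_eq pos_le_divide_eq abs_le_iff algebra_simps)
  also have "\<dots> \<longleftrightarrow> (k * a - c)\<^sup>2 \<le> (2 * sqrt D ^ 3)\<^sup>2"
    using abs_le_square_iff[of "k * a - c" "2 * sqrt D ^ 3"] assms(2) by simp
  also have "(2 * sqrt D ^ 3)\<^sup>2 = 4 * (sqrt D)\<^sup>2 ^ 3"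
    by algebra
  also have "(sqrt D)\<^sup>2 = D"
    using assms(2) by simp
  finally show ?thesis .
qed

theorem proposition3p2:
  fixes a0 a1 a2 a3 :: real
  defines "f \<equiv> [:complex_of_real a0, complex_of_real a1, complex_of_real a2, complex_of_real a3:]"
  defines "D \<equiv> a2\<^sup>2 - 3 * a1 * a3"
  defines "dagger \<equiv>
      (- 2 * a2 ^ 3 + 9 * a1 * a2 * a3 - 2 * (sqrt D) ^ 3) / (27 * a3\<^sup>2) \<le> a0 \<and>
      a0 \<le> (- 2 * a2 ^ 3 + 9 * a1 * a2 * a3 + 2 * (sqrt D) ^ 3) / (27 * a3\<^sup>2)"
  assumes "a3 > 0" and "D \<ge> 0"
  shows "((\<forall>z. poly f z = 0 \<longrightarrow> z \<in> \<real> \<and> Re z \<ge> 0) \<longleftrightarrow>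
            a2 \<le> 0 \<and> 0 \<le> a1 \<and> a1 \<le> a2\<^sup>2 / (3 * a3) \<and> a0 \<le> 0 \<and> dagger)
       \<and> ((\<forall>z. poly f z = 0 \<longrightarrow> z \<in> \<real> \<and> Re z > 0) \<longleftrightarrow>
            a2 < 0 \<and> 0 < a1 \<and> a1 \<le> a2\<^sup>2 / (3 * a3) \<and> a0 < 0 \<and> dagger)"
proof -
  have "dagger \<longleftrightarrow> (27 * a3\<^sup>2 * a0 - (- 2 * a2 ^ 3 + 9 * a1 * a2 * a3))\<^sup>2 \<le> 4 * D ^ 3"
    unfolding dagger_def using assms(4,5) by (intro between_sqrt_cube_bounds_iff) simp_all
  also have "27 * a3\<^sup>2 * a0 - (- 2 * a2 ^ 3 + 9 * a1 * a2 * a3) =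
             27 * a3\<^sup>2 * a0 + 2 * a2 ^ 3 - 9 * a1 * a2 * a3"
    by simp
  also have "(\<dots>)\<^sup>2 \<le> 4 * D ^ 3 \<longleftrightarrow> cubic_discr a0 a1 a2 a3 \<ge> 0"
    unfolding cubic_discr_def D_def by simp
  finally have real_iff: "(\<forall>z. poly f z = 0 \<longrightarrow> z \<in> \<real>) \<longleftrightarrow> dagger"
    unfolding f_def using real_cubic_roots_real_iff assms(4) by simp
  have "a1 \<le> a2\<^sup>2 / (3 * a3)"
    using assms(4,5) unfolding D_def by (simp add: pos_le_divide_eq algebra_simps)
  then show ?thesis
    using real_iff real_cubic_real_roots_nonneg_iff[OF assms(4)]
      real_cubic_real_roots_pos_iff[OF assms(4)]
    unfolding f_def by blast
qed

end
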